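(* Let $X$ be a reflexive Banach space, let $R:X\to X$ be a bounded linear isomorphism of $X$ onto $X$, and let $L:X\times X^*\to\mathbb{R}\cup\{+\infty\}$ be convex, lower semicontinuous and not identically $+\infty$. Assume $L$ is partially $R$-antiselfdual, i.e. $L^*(0,x)=L(-Rx,0)$ for all $x\in X$, and that for some $x_0\in X$ the function $p\mapsto L(x_0,p)$ is bounded above on a neighborhood of the origin in $X^*$. Then there exists $\bar x\in X$ such that $$L(-R\bar x,0)=\inf_{x\in X}L(x,0)=0\qquad\text{and}\qquad (0,\bar x)\in\partial L(-R\bar x,0).$$
   Context: For a function $L$ on $X\times X^*$, its Legendre–Fenchel transform (in both variables) is $L^*(q,y)=\sup\{\langle q,x\rangle+\langle y,p\rangle-L(x,p):x\in X,\ p\in X^*\}$ for $(q,y)\in X^*\times X$ (with $X^{**}=X$). $\partial L$ denotes the convex subdifferential of $L$ on $X\times X^*$, with values in $X^*\times X$. *)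

theory Defs
  imports "HOL-Analysis.Analysis"
begin

text \<open>The dual space X* of a real Banach space X is modelled by the type of bounded
  linear functionals  'a \<Rightarrow>L real  (with the operator norm), the duality pairing
  being application.\<close>

definition reflexive_space :: "'a::real_normed_vector itself \<Rightarrow> bool" where
  "reflexive_space _ \<longleftrightarrow>
     (\<forall>\<phi> :: ('a \<Rightarrow>\<^sub>L real) \<Rightarrow>\<^sub>L real. \<exists>x::'a. \<forall>f. blinfun_apply \<phi> f = blinfun_apply f x)"

text \<open>Convexity of an extended-real valued function (never equal to minus infinity).\<close>
definition ereal_convex :: "('v::real_vector \<Rightarrow> ereal) \<Rightarrow> bool" where
  "ereal_convex F \<longleftrightarrow>
     (\<forall>u v. \<forall>t::real. 0 < t \<and> t < 1 \<longrightarrow>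
        F (t *\<^sub>R u + (1 - t) *\<^sub>R v) \<le> ereal t * F u + ereal (1 - t) * F v)"

definition ereal_lsc :: "('v::topological_space \<Rightarrow> ereal) \<Rightarrow> bool" where
  "ereal_lsc F \<longleftrightarrow> (\<forall>c::real. closed {z. F z \<le> ereal c})"

text \<open>Legendre--Fenchel transform in both variables, on X* \<times> X (using X** = X).\<close>
definition legendre ::
  "('a::real_normed_vector \<times> ('a \<Rightarrow>\<^sub>L real) \<Rightarrow> ereal) \<Rightarrow> ('a \<Rightarrow>\<^sub>L real) \<times> 'a \<Rightarrow> ereal" where
  "legendre L = (\<lambda>(q, y). SUP (x, p) \<in> UNIV. ereal (blinfun_apply q x + blinfun_apply p y) - L (x, p))"

definition subdiff ::
  "('a::real_normed_vector \<times> ('a \<Rightarrow>\<^sub>L real) \<Rightarrow> ereal) \<Rightarrow> 'a \<times> ('a \<Rightarrow>\<^sub>L real) \<Rightarrow> (('a \<Rightarrow>\<^sub>L real) \<times> 'a) set" where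
  "subdiff L = (\<lambda>(x, p). {(q, y). L (x, p) \<noteq> \<infinity> \<and>
      (\<forall>x' p'. L (x', p') \<ge> L (x, p) + ereal (blinfun_apply q (x' - x) + blinfun_apply (p' - p) y))})"

end

theory Submission
  imports Defs
begin

text \<open>
  Fenchel--Young at p = 0 gives L*(0,y) \<ge> -L(x,0); as L*(0,y) = L(-Ry,0) and R is onto,
  L(x,0) \<ge> -L(x,0), so L is nonnegative on X \<times> {0}: the zero functional on the subspace
  X \<times> {0} lies below L. Since L(x0,\<cdot>) is finite near 0, the cone generated by
  dom L - X \<times> {0} is the whole space, and a Hahn--Banach argument for convex (rather than
  sublinear) majorants extends the zero functional to a linear minorant f of L vanishing on
  X \<times> {0}. Then f(x,p) depends on p only, is bounded above near 0, hence continuous, and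
  by reflexivity f(x,p) = p(y) for some y. This says L*(0,y) \<le> 0, so
  L(-Ry,0) = L*(0,y) = 0 = inf L(\<cdot>,0), and the minorant inequality is exactly
  (0,y) \<in> \<partial>L(-Ry,0).
\<close>

text \<open>Partial linear functionals on W are encoded by their graphs in W \<times> \<real>, so that
  extension is set inclusion.\<close>
definition functional_graph :: "('w::real_vector \<times> real) set \<Rightarrow> bool" where
  "functional_graph G \<longleftrightarrow> subspace G \<and> (\<forall>t. (0, t) \<in> G \<longrightarrow> t = 0)"

definition graph_below :: "('w \<times> real) set \<Rightarrow> ('w \<Rightarrow> ereal) \<Rightarrow> bool" where
  "graph_below G g \<longleftrightarrow> (\<forall>(x, t) \<in> G. ereal t \<le> g x)"

definition domain_absorbing :: "('w::real_vector \<times> real) set \<Rightarrow> ('w \<Rightarrow> ereal) \<Rightarrow> bool" where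
  "domain_absorbing G g \<longleftrightarrow> (\<forall>w. \<exists>x t a. (x, t) \<in> G \<and> 0 < a \<and> g (x + a *\<^sub>R w) \<noteq> \<infinity>)"

lemma domain_absorbing_mono: "domain_absorbing G g \<Longrightarrow> G \<subseteq> H \<Longrightarrow> domain_absorbing H g"
  unfolding domain_absorbing_def by blast

lemma graph_belowD: "graph_below G g \<Longrightarrow> (x, t) \<in> G \<Longrightarrow> ereal t \<le> g x"
  unfolding graph_below_def by blast

lemma subspace_Union_chain:
  assumes "C \<noteq> {}" and "\<And>S. S \<in> C \<Longrightarrow> subspace S"
    and chain: "\<And>S T. S \<in> C \<Longrightarrow> T \<in> C \<Longrightarrow> S \<subseteq> T \<or> T \<subseteq> S"
  shows "subspace (\<Union>C)"
  unfolding subspace_def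
proof (intro conjI ballI allI)
  show "0 \<in> \<Union>C"
    using assms(1,2) subspace_0 by blast
next
  fix x y assume "x \<in> \<Union>C" "y \<in> \<Union>C"
  then obtain S T where "S \<in> C" "T \<in> C" "x \<in> S" "y \<in> T" by blast
  with chain[of S T] assms(2) show "x + y \<in> \<Union>C"
    by (metis UnionI subsetD subspace_add)
next
  fix c x assume "x \<in> \<Union>C"
  with assms(2) show "c *\<^sub>R x \<in> \<Union>C"
    by (metis UnionE UnionI subspace_scale)
qed

lemma functional_graph_Union_chain:
  assumes "C \<noteq> {}" and C: "\<And>G. G \<in> C \<Longrightarrow> functional_graph G \<and> graph_below G g"
    and chain: "\<And>S T. S \<in> C \<Longrightarrow> T \<in> C \<Longrightarrow> S \<subseteq> T \<or> T \<subseteq> S"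
  shows "functional_graph (\<Union>C) \<and> graph_below (\<Union>C) g"
proof -
  have "subspace S" "\<forall>t. (0, t) \<in> S \<longrightarrow> t = 0" "graph_below S g" if "S \<in> C" for S
    using C[OF that] unfolding functional_graph_def by auto
  then have "subspace (\<Union>C)" "\<forall>t. (0, t) \<in> \<Union>C \<longrightarrow> t = 0" "graph_below (\<Union>C) g"
    using subspace_Union_chain[OF assms(1) _ chain] unfolding graph_below_def by blast+
  then show ?thesis
    unfolding functional_graph_def by blast
qed

lemma functional_graph_unique:
  assumes "functional_graph G" "(x, s) \<in> G" "(x, t) \<in> G"
  shows "s = t"
proof -
  have "(0, s - t) \<in> G"
    using assms subspace_diff[of G "(x, s)" "(x, t)"] unfolding functional_graph_def by simp
  then have "s - t = 0"
    using assms(1) unfolding functional_graph_def by blast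
  then show ?thesis
    by simp
qed

lemma functional_graph_total_linear:
  assumes G: "functional_graph G" and total: "\<And>x. \<exists>t. (x, t) \<in> G"
  obtains f where "linear f" "\<And>x t. (x, t) \<in> G \<longleftrightarrow> t = f x"
proof
  define f where "f x = (SOME t. (x, t) \<in> G)" for x
  have f_in: "(x, f x) \<in> G" for x
    unfolding f_def using total by (rule someI_ex)
  with functional_graph_unique[OF G] show graph: "(x, t) \<in> G \<longleftrightarrow> t = f x" for x t
    by blast
  have sub: "subspace G"
    using G by (simp add: functional_graph_def)
  show "linear f"
  proof
    show "f (x + y) = f x + f y" for x y
      using subspace_add[OF sub f_in f_in] graph by simp
    show "f (c *\<^sub>R x) = c *\<^sub>R f x" for c x
      using subspace_scale[OF sub f_in, of c] graph by simp
  qed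
qed

lemma ereal_convexD_finite:
  assumes "ereal_convex g" "0 < l" "l < 1" "g u = ereal a" "g w = ereal b"
  shows "g (l *\<^sub>R u + (1 - l) *\<^sub>R w) \<le> ereal (l * a + (1 - l) * b)"
  using assms unfolding ereal_convex_def
  by (metis plus_ereal.simps(1) times_ereal.simps(1))

lemma graph_below_slopes_ordered:
  assumes conv: "ereal_convex g" and sub: "subspace G" and below: "graph_below G g"
    and in1: "(x1, t1) \<in> G" and in2: "(x2, t2) \<in> G" and a: "0 < a" and b: "0 < b"
    and g1: "g (x1 - b *\<^sub>R v) = ereal g1" and g2: "g (x2 + a *\<^sub>R v) = ereal g2"
  shows "(t1 - g1) / b \<le> (g2 - t2) / a"
proof -
  \<comment> \<open>the weights for which the v-components cancel\<close>
  define l where "l = a / (a + b)"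
  have l: "0 < l" "l < 1" "(1 - l) * a = l * b"
    using a b by (auto simp: l_def field_simps)
  have "1 - l = b / (a + b)"
    using a b by (simp add: l_def field_simps)
  then have weights: "(a + b) * (l * s + (1 - l) * u) = a * s + b * u" for s u
    using a b by (simp add: l_def distrib_left)
  have "l *\<^sub>R (x1 - b *\<^sub>R v) + (1 - l) *\<^sub>R (x2 + a *\<^sub>R v)
      = l *\<^sub>R x1 + (1 - l) *\<^sub>R x2 + ((1 - l) * a - l * b) *\<^sub>R v"
    by (simp add: algebra_simps)
  then have g_mid: "g (l *\<^sub>R x1 + (1 - l) *\<^sub>R x2) \<le> ereal (l * g1 + (1 - l) * g2)"
    using ereal_convexD_finite[OF conv l(1,2) g1 g2] l(3) by simp
  have "(l *\<^sub>R x1 + (1 - l) *\<^sub>R x2, l * t1 + (1 - l) * t2) \<in> G"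
    using subspace_add[OF sub subspace_scale[OF sub in1] subspace_scale[OF sub in2]] by simp
  then have "ereal (l * t1 + (1 - l) * t2) \<le> ereal (l * g1 + (1 - l) * g2)"
    using graph_belowD[OF below] g_mid order_trans by blast
  then have "(a + b) * (l * t1 + (1 - l) * t2) \<le> (a + b) * (l * g1 + (1 - l) * g2)"
    using a b by (simp add: mult_left_mono)
  then have "a * t1 + b * t2 \<le> a * g1 + b * g2"
    by (simp only: weights)
  then show ?thesis
    using a b by (simp add: field_simps)
qed

lemma real_between_sets:
  fixes A B :: "real set"
  assumes "A \<noteq> {}" "B \<noteq> {}" and le: "\<And>a b. a \<in> A \<Longrightarrow> b \<in> B \<Longrightarrow> a \<le> b"
  obtains c where "\<And>a. a \<in> A \<Longrightarrow> a \<le> c" "\<And>b. b \<in> B \<Longrightarrow> c \<le> b"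
proof (rule that[of "Sup A"])
  have "bdd_above A"
    using assms(2) le by (meson bdd_aboveI ex_in_conv)
  then show "a \<le> Sup A" if "a \<in> A" for a
    using cSup_upper[OF that] by blast
  show "Sup A \<le> b" if "b \<in> B" for b
    using assms(1) le that by (blast intro: cSup_least)
qed

text \<open>The one-dimensional extension step of Hahn--Banach: a slope c for the new direction v
  exists because, by convexity, every lower slope is below every upper slope.\<close>
lemma graph_below_exists_slope:
  fixes g :: "'w::real_vector \<Rightarrow> ereal"
  assumes conv: "ereal_convex g" and nm: "\<forall>z. g z \<noteq> -\<infinity>"
    and sub: "subspace G" and below: "graph_below G g"
    and core: "domain_absorbing G g"
  obtains c where "\<And>x t a. (x, t) \<in> G \<Longrightarrow> ereal (t + a * c) \<le> g (x + a *\<^sub>R v)"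
proof -
  define lo where "lo = {(t - r) / b | x t b r. (x, t) \<in> G \<and> 0 < b \<and> g (x - b *\<^sub>R v) = ereal r}"
  define hi where "hi = {(r - t) / a | x t a r. (x, t) \<in> G \<and> 0 < a \<and> g (x + a *\<^sub>R v) = ereal r}"
  have finite: "\<exists>r. g z = ereal r" if "g z \<noteq> \<infinity>" for z
    using that nm by (cases "g z") auto
  have "lo \<noteq> {}"
    using core[unfolded domain_absorbing_def, rule_format, of "- v"] finite unfolding lo_def by fastforce
  moreover have "hi \<noteq> {}"
    using core[unfolded domain_absorbing_def, rule_format, of v] finite unfolding hi_def by fastforce
  moreover have "l \<le> h" if l: "l \<in> lo" and h: "h \<in> hi" for l h
  proof -
    obtain x1 t1 b g1 where "l = (t1 - g1) / b" "(x1, t1) \<in> G" "0 < b" "g (x1 - b *\<^sub>R v) = ereal g1"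
      using l unfolding lo_def by blast
    moreover obtain x2 t2 a g2 where "h = (g2 - t2) / a" "(x2, t2) \<in> G" "0 < a" "g (x2 + a *\<^sub>R v) = ereal g2"
      using h unfolding hi_def by blast
    ultimately show ?thesis
      using graph_below_slopes_ordered[OF conv sub below] by simp
  qed
  ultimately obtain c where lo_c: "\<And>l. l \<in> lo \<Longrightarrow> l \<le> c" and c_hi: "\<And>h. h \<in> hi \<Longrightarrow> c \<le> h"
    using real_between_sets by metis
  show ?thesis
  proof
    fix x t a assume xt: "(x, t) \<in> G"
    show "ereal (t + a * c) \<le> g (x + a *\<^sub>R v)"
    proof (cases "g (x + a *\<^sub>R v)")
      case (real r)
      consider "a = 0" | "0 < a" | "a < 0" by linarith
      then have "t + a * c \<le> r"
      proof cases
        case 1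
        then show ?thesis using graph_belowD[OF below xt] real by simp
      next
        case 2
        then have "c \<le> (r - t) / a"
          using c_hi xt real unfolding hi_def by blast
        then show ?thesis using 2 by (simp add: field_simps)
      next
        case 3
        have "(t - r) / (- a) \<in> lo"
          unfolding lo_def using xt real 3
          by (intro CollectI exI[of _ x] exI[of _ t] exI[of _ "- a"] exI[of _ r]) simp
        then show ?thesis using lo_c[of "(t - r) / (- a)"] 3 by (simp add: field_simps)
      qed
      then show ?thesis using real by simp
    qed (use nm in auto)
  qed
qed

lemma functional_graph_extend:
  fixes g :: "'w::real_vector \<Rightarrow> ereal"
  assumes conv: "ereal_convex g" and nm: "\<forall>z. g z \<noteq> -\<infinity>"
    and G: "functional_graph G" and below: "graph_below G g"
    and core: "domain_absorbing G g"
    and v: "\<forall>t. (v, t) \<notin> G"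
  obtains G' where "functional_graph G'" "graph_below G' g" "G \<subset> G'"
proof -
  have sub: "subspace G"
    using G by (simp add: functional_graph_def)
  obtain c where slope: "\<And>x t a. (x, t) \<in> G \<Longrightarrow> ereal (t + a * c) \<le> g (x + a *\<^sub>R v)"
    using graph_below_exists_slope[OF conv nm sub below core] by blast
  define G' where "G' = span (insert (v, c) G)"
  have mem: "(z, s) \<in> G' \<longleftrightarrow> (\<exists>k. (z - k *\<^sub>R v, s - k * c) \<in> G)" for z s
    unfolding G'_def span_insert span_eq_iff[THEN iffD2, OF sub] by simp
  have "functional_graph G'"
    unfolding functional_graph_def
  proof (intro conjI allI impI)
    show "subspace G'"
      unfolding G'_def by (rule subspace_span)
    fix s assume "(0, s) \<in> G'"
    then obtain k where k: "(- (k *\<^sub>R v), s - k * c) \<in> G"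
      using mem by auto
    show "s = 0"
    proof (cases "k = 0")
      case True
      then show ?thesis using k G by (simp add: functional_graph_def)
    next
      case False
      have "(- 1 / k) *\<^sub>R (- (k *\<^sub>R v), s - k * c) \<in> G"
        using subspace_scale[OF sub k] .
      then show ?thesis
        using False v by simp
    qed
  qed
  moreover have "graph_below G' g"
    unfolding graph_below_def
  proof clarify
    fix z s assume "(z, s) \<in> G'"
    then obtain k where "(z - k *\<^sub>R v, s - k * c) \<in> G"
      using mem by blast
    from slope[OF this, of k] show "ereal s \<le> g z"
      by simp
  qed
  moreover have "G \<subset> G'"
  proof -
    have "(v, c) \<in> G'"
      unfolding G'_def by (simp add: span_base)
    then show ?thesis
      using span_superset[of "insert (v, c) G"] v unfolding G'_def by blast
  qed
  ultimately show ?thesis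
    using that by blast
qed

theorem convex_hahn_banach:
  fixes g :: "'w::real_vector \<Rightarrow> ereal"
  assumes conv: "ereal_convex g" and nm: "\<forall>z. g z \<noteq> -\<infinity>"
    and G0: "functional_graph G0" "graph_below G0 g"
    and core: "domain_absorbing G0 g"
  obtains f where "linear f" "\<And>z. ereal (f z) \<le> g z" "\<And>x t. (x, t) \<in> G0 \<Longrightarrow> f x = t"
proof -
  define A where "A = {G. functional_graph G \<and> graph_below G g \<and> G0 \<subseteq> G}"
  have "\<exists>M\<in>A. \<forall>X\<in>A. M \<subseteq> X \<longrightarrow> X = M"
  proof (rule subset_Zorn_nonempty)
    show "A \<noteq> {}"
      using G0 unfolding A_def by blast
    fix C assume C: "C \<noteq> {}" "subset.chain A C"
    then have CA: "C \<subseteq> A" and chain: "\<And>S T. S \<in> C \<Longrightarrow> T \<in> C \<Longrightarrow> S \<subseteq> T \<or> T \<subseteq> S"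
      unfolding subset.chain_def by blast+
    have "functional_graph (\<Union>C) \<and> graph_below (\<Union>C) g"
      using functional_graph_Union_chain[OF C(1) _ chain] CA unfolding A_def by blast
    moreover have "G0 \<subseteq> \<Union>C"
      using C(1) CA unfolding A_def by blast
    ultimately show "\<Union>C \<in> A"
      unfolding A_def by blast
  qed
  then obtain M where "M \<in> A" and maximal: "\<And>X. X \<in> A \<Longrightarrow> M \<subseteq> X \<Longrightarrow> X = M"
    by blast
  then have M: "functional_graph M" "graph_below M g" "G0 \<subseteq> M"
    unfolding A_def by auto
  have total: "\<exists>t. (v, t) \<in> M" for v
  proof (rule ccontr)
    assume "\<nexists>t. (v, t) \<in> M"
    then have v: "\<forall>t. (v, t) \<notin> M"
      by blast
    have core_M: "domain_absorbing M g"
      using core M(3) by (rule domain_absorbing_mono)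
    obtain G' where "functional_graph G'" "graph_below G' g" "M \<subset> G'"
      using functional_graph_extend[OF conv nm M(1,2) core_M v] .
    then show False
      using maximal[of G'] M(3) unfolding A_def by blast
  qed
  obtain f where "linear f" and graph: "\<And>x t. (x, t) \<in> M \<longleftrightarrow> t = f x"
    using functional_graph_total_linear[OF M(1) total] by blast
  moreover have "ereal (f z) \<le> g z" for z
    using graph_belowD[OF M(2)] graph by blast
  moreover have "f x = t" if "(x, t) \<in> G0" for x t
    using that M(3) graph[of x t] by auto
  ultimately show ?thesis
    using that by blast
qed

lemma bounded_linear_if_bounded_above_on_ball:
  fixes \<phi> :: "'v::real_normed_vector \<Rightarrow> real"
  assumes lin: "linear \<phi>" and r: "0 < r" and bound: "\<And>p. norm p < r \<Longrightarrow> \<phi> p \<le> M"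
  shows "bounded_linear \<phi>"
proof (rule bounded_linear_intro[where K = "2 * M / r"])
  show "\<phi> (p + q) = \<phi> p + \<phi> q" "\<phi> (c *\<^sub>R p) = c *\<^sub>R \<phi> p" for p q c
    using lin by (simp_all add: linear_add linear_scale)
  show "norm (\<phi> p) \<le> norm p * (2 * M / r)" for p
  proof (cases "p = 0")
    case True
    then show ?thesis
      using lin by (simp add: linear_0)
  next
    case False
    define k where "k = r / (2 * norm p)"
    have k: "0 < k" "norm (k *\<^sub>R p) < r"
      using r False by (simp_all add: k_def)
    have "k * \<phi> p \<le> M" "- (k * \<phi> p) \<le> M"
      using bound[of "k *\<^sub>R p"] bound[of "- (k *\<^sub>R p)"] k(2) lin
      by (simp_all add: linear_scale linear_neg)
    then have "k * \<bar>\<phi> p\<bar> \<le> M"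
      using k(1) by (simp add: abs_if)
    then show ?thesis
      using k(1) r False by (simp add: k_def field_simps)
  qed
qed

lemma reflexive_spaceE:
  fixes \<phi> :: "('a::real_normed_vector \<Rightarrow>\<^sub>L real) \<Rightarrow> real"
  assumes "reflexive_space TYPE('a)" and "bounded_linear \<phi>"
  obtains y where "\<And>p. \<phi> p = blinfun_apply p y"
  using assms bounded_linear_Blinfun_apply unfolding reflexive_space_def by metis

lemma legendre_ge: "ereal (blinfun_apply q x + blinfun_apply p y) - L (x, p) \<le> legendre L (q, y)"
  unfolding legendre_def by (auto intro: SUP_upper2[of "(x, p)"])

lemma legendre_nonpos_of_minorant:
  assumes "\<And>x p. ereal (blinfun_apply p y) \<le> L (x, p)"
  shows "legendre L (0, y) \<le> 0"
  unfolding legendre_def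
proof (clarsimp intro!: SUP_least)
  fix x p
  show "ereal (blinfun_apply p y) - L (x, p) \<le> 0"
    using assms[of p x] by (cases "L (x, p)") auto
qed

lemma partially_antiselfdual_nonneg:
  fixes R :: "'a::real_normed_vector \<Rightarrow>\<^sub>L 'a"
  assumes surj: "surj (blinfun_apply R)" and nm: "\<forall>z. L z \<noteq> -\<infinity>"
    and anti: "\<forall>x. legendre L (0, x) = L (- blinfun_apply R x, 0)"
  shows "0 \<le> L (x, 0)"
proof -
  obtain y where y: "- blinfun_apply R y = x"
    using surj by (metis surj_def minus_minus)
  have "- L (x, 0) \<le> legendre L (0, y)"
    using legendre_ge[of 0 x 0 y L] by (simp add: zero_ereal_def[symmetric])
  also have "\<dots> = L (x, 0)"
    using anti y by simp
  finally show ?thesis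
    using nm by (cases "L (x, 0)") auto
qed

lemma domain_absorbing_zero_section:
  fixes g :: "'a::real_vector \<times> 'b::real_normed_vector \<Rightarrow> ereal"
  assumes r: "0 < r" and finite: "\<And>p. norm p < r \<Longrightarrow> g (x, p) \<noteq> \<infinity>"
  shows "domain_absorbing ((UNIV \<times> {0}) \<times> {0}) g"
  unfolding domain_absorbing_def
proof
  fix w :: "'a \<times> 'b"
  obtain u e where w: "w = (u, e)"
    by fastforce
  define a where "a = r / (norm e + 1)"
  have pos: "0 < norm e + 1"
    by (simp add: add_nonneg_pos)
  then have "0 < a"
    using r by (simp add: a_def)
  then have "a * norm e < a * (norm e + 1)"
    by simp
  also have "\<dots> = r"
    using pos by (simp add: a_def)
  finally have "g ((x - a *\<^sub>R u, 0) + a *\<^sub>R w) \<noteq> \<infinity>"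
    using finite[of "a *\<^sub>R e"] w \<open>0 < a\<close> by auto
  then show "\<exists>z t a. (z, t) \<in> (UNIV \<times> {0}) \<times> {0} \<and> 0 < a \<and> g (z + a *\<^sub>R w) \<noteq> \<infinity>"
    using \<open>0 < a\<close> by blast
qed

lemma linear_vanishing_on_fst:
  assumes lin: "linear f" and zero: "\<And>x. f (x, 0) = 0"
  shows "f (x, p) = f (0, p)" and "linear (\<lambda>p. f (0, p))"
proof -
  show "f (x, p) = f (0, p)"
    using linear_add[OF lin, of "(x, 0)" "(0, p)"] zero by simp
  show "linear (\<lambda>p. f (0, p))"
  proof
    show "f (0, p + q) = f (0, p) + f (0, q)" for p q
      using linear_add[OF lin, of "(0, p)" "(0, q)"] by simp
    show "f (0, c *\<^sub>R p) = c *\<^sub>R f (0, p)" for c p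
      using linear_scale[OF lin, of c "(0, p)"] by simp
  qed
qed

lemma exists_bounded_linear_minorant:
  fixes g :: "'a::real_normed_vector \<times> 'b::real_normed_vector \<Rightarrow> ereal"
  assumes conv: "ereal_convex g" and nm: "\<forall>z. g z \<noteq> -\<infinity>"
    and nonneg: "\<And>x. 0 \<le> g (x, 0)"
    and U: "open U" "0 \<in> U" and bdd: "\<And>p. p \<in> U \<Longrightarrow> g (x0, p) \<le> ereal M"
  obtains \<phi> where "bounded_linear \<phi>" "\<And>x p. ereal (\<phi> p) \<le> g (x, p)"
proof -
  obtain r where r: "0 < r" and ball: "\<And>p. norm p < r \<Longrightarrow> g (x0, p) \<le> ereal M"
    using U bdd by (metis open_contains_ball_eq mem_ball_0 subsetD)
  define G0 :: "(('a \<times> 'b) \<times> real) set" where "G0 = (UNIV \<times> {0}) \<times> {0}"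
  have "functional_graph G0"
    unfolding functional_graph_def G0_def by (simp add: subspace_Times)
  moreover have "graph_below G0 g"
    unfolding graph_below_def G0_def using nonneg by (auto simp: zero_ereal_def)
  moreover have "domain_absorbing G0 g"
    unfolding G0_def using ball by (intro domain_absorbing_zero_section[OF r, where x = x0]) fastforce
  ultimately obtain f where lin: "linear f" and f_le: "\<And>z. ereal (f z) \<le> g z"
    and f_G0: "\<And>z t. (z, t) \<in> G0 \<Longrightarrow> f z = t"
    using convex_hahn_banach[OF conv nm] by blast
  have "f (x, 0) = 0" for x
    using f_G0[of "(x, 0)" 0] unfolding G0_def by simp
  note f_eq = linear_vanishing_on_fst[OF lin this]
  have "f (0, p) \<le> M" if "norm p < r" for p
    using f_le[of "(x0, p)"] ball[OF that] f_eq(1) by (metis ereal_less_eq(3) order_trans)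
  then have "bounded_linear (\<lambda>p. f (0, p))"
    using bounded_linear_if_bounded_above_on_ball[OF f_eq(2) r] by blast
  then show ?thesis
  proof (rule that)
    show "ereal (f (0, p)) \<le> g (x, p)" for x p
      using f_le[of "(x, p)"] f_eq(1)[of x p] by simp
  qed
qed

theorem proposition2p1:
  fixes R :: "'a::banach \<Rightarrow>\<^sub>L 'a"
    and L :: "'a \<times> ('a \<Rightarrow>\<^sub>L real) \<Rightarrow> ereal"
  assumes refl: "reflexive_space TYPE('a)"
    and R_iso: "bij (blinfun_apply R)"
    and L_proper: "\<forall>z. L z \<noteq> -\<infinity>" "\<exists>z. L z \<noteq> \<infinity>"
    and L_convex: "ereal_convex L"
    and L_lsc: "ereal_lsc L"
    and L_anti: "\<forall>x. legendre L (0, x) = L (- blinfun_apply R x, 0)"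
    and L_bdd: "\<exists>x0 U. open U \<and> (0::'a \<Rightarrow>\<^sub>L real) \<in> U \<and> (\<exists>M::real. \<forall>p\<in>U. L (x0, p) \<le> ereal M)"
  shows "\<exists>xb. L (- blinfun_apply R xb, 0) = 0 \<and> (INF x. L (x, 0)) = 0
              \<and> (0, xb) \<in> subdiff L (- blinfun_apply R xb, 0)"
proof -
  have nonneg: "0 \<le> L (x, 0)" for x
    using partially_antiselfdual_nonneg[OF bij_is_surj[OF R_iso] L_proper(1) L_anti] .
  obtain x0 U M where "open U" "0 \<in> U" "\<And>p. p \<in> U \<Longrightarrow> L (x0, p) \<le> ereal M"
    using L_bdd by blast
  then obtain \<phi> where "bounded_linear \<phi>" and \<phi>: "\<And>x p. ereal (\<phi> p) \<le> L (x, p)"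
    using exists_bounded_linear_minorant[OF L_convex L_proper(1) nonneg] by blast
  then obtain y where minorant: "\<And>x p. ereal (blinfun_apply p y) \<le> L (x, p)"
    using reflexive_spaceE[OF refl] by metis
  have "L (- blinfun_apply R y, 0) = legendre L (0, y)"
    using L_anti by simp
  also have "\<dots> \<le> 0"
    using minorant by (rule legendre_nonpos_of_minorant)
  finally have zero: "L (- blinfun_apply R y, 0) = 0"
    using nonneg antisym by blast
  have "(INF x. L (x, 0)) \<le> L (- blinfun_apply R y, 0)"
    by (rule INF_lower) simp
  moreover have "0 \<le> (INF x. L (x, 0))"
    using nonneg by (rule INF_greatest)
  ultimately have "(INF x. L (x, 0)) = 0"
    unfolding zero by (rule antisym)
  moreover have "(0, y) \<in> subdiff L (- blinfun_apply R y, 0)"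
    unfolding subdiff_def using zero minorant by simp
  ultimately show ?thesis
    using zero by blast
qed

end
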